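(* Let $(G,\phi)$ be a test-fee structure. If $\phi_t<\int_{\mu+\phi_d}^{\overline{\theta}}[s-(\mu+\phi_d)]\,dG(s)$, then in every equilibrium of the induced game the asset is tested with probability $1$; otherwise, there exists an equilibrium in which the asset is tested with probability $0$.
   Context: The asset value $\theta\sim F$ with support in $[\underline{\theta},\overline{\theta}]$ ($0\le\underline{\theta}<\overline{\theta}<\infty$ the extreme support points) and mean $\mu$. A test-fee structure $(G,\phi)$ consists of $G$, the marginal CDF of scores of an unbiased test (a stochastic map from $\theta$ to a score $s\in[\underline{\theta},\overline{\theta}]$ with $E[\theta\mid s]=s$), and fees $\phi=(\phi_t,\phi_d)\in\mathbb{R}^2$. In the induced game the agent, not observing $\theta$, decides whether to pay testing fee $\phi_t$ and privately observe $s$; then whether to pay disclosure fee $\phi_d$ to verifiably disclose $s$ to two buyers, who otherwise observe a null message $N$ and cannot tell whether a test occurred. Buyers bid in a first-price auction; the agent receives the price minus fees paid. Equilibrium means perfect Bayesian equilibrium (buyers share beliefs, so price equals the asset's conditional expected value). *)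

theory Defs
  imports "HOL-Probability.Probability"
begin

definition asset_prior :: "real measure \<Rightarrow> real \<Rightarrow> real \<Rightarrow> real \<Rightarrow> bool" where
  "asset_prior F lo hi mu \<longleftrightarrow>
     prob_space F \<and> sets F = sets borel \<and> 0 \<le> lo \<and> lo < hi \<and>
     emeasure F {lo..hi} = 1 \<and>
     (\<forall>e>0. emeasure F {lo..lo+e} > 0 \<and> emeasure F {hi-e..hi} > 0) \<and>
     mu = (\<integral>x. x \<partial>F)"

text \<open>An unbiased test, given as the joint law J of (theta, s): first marginal F,
  scores in [lo,hi], and E[theta | s] = s (defining property of conditional expectation).\<close>
definition unbiased_test :: "real measure \<Rightarrow> real \<Rightarrow> real \<Rightarrow> (real \<times> real) measure \<Rightarrow> bool" where
  "unbiased_test F lo hi J \<longleftrightarrow>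
     prob_space J \<and> sets J = sets (borel :: (real \<times> real) measure) \<and>
     distr J borel fst = F \<and>
     (AE x in J. snd x \<in> {lo..hi}) \<and>
     (\<forall>B\<in>sets (borel :: real measure).
        (\<integral>x. indicator B (snd x) * fst x \<partial>J) = (\<integral>x. indicator B (snd x) * snd x \<partial>J))"

definition score_dist :: "(real \<times> real) measure \<Rightarrow> real measure" where
  "score_dist J = distr J borel snd"

text \<open>Perfect Bayesian equilibrium of the induced game.
  q: probability of testing; d s: probability of disclosing score s;
  pN: price after the null message (buyers' common expectation of theta given N).
  After disclosure of s the price is E[theta | s] = s.\<close>
definition equilibrium ::
  "real measure \<Rightarrow> real \<Rightarrow> real \<Rightarrow> (real \<times> real) measure \<Rightarrow> real \<Rightarrow> real \<Rightarrow>
   real \<Rightarrow> (real \<Rightarrow> real) \<Rightarrow> real \<Rightarrow> bool" where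
  "equilibrium F lo hi J phi_t phi_d q d pN \<longleftrightarrow>
     q \<in> {0..1} \<and> d \<in> borel_measurable borel \<and> (\<forall>s. d s \<in> {0..1}) \<and> pN \<in> {lo..hi} \<and>
     \<comment> \<open>Bayes' rule on the null message whenever it has positive probability\<close>
     ((1 - q) + q * (\<integral>x. 1 - d (snd x) \<partial>J) > 0 \<longrightarrow>
        pN * ((1 - q) + q * (\<integral>x. 1 - d (snd x) \<partial>J))
          = (1 - q) * (\<integral>x. x \<partial>F) + q * (\<integral>x. (1 - d (snd x)) * fst x \<partial>J)) \<and>
     \<comment> \<open>optimal disclosure at every score\<close>
     (\<forall>s\<in>{lo..hi}. (d s > 0 \<longrightarrow> s - phi_d \<ge> pN) \<and> (d s < 1 \<longrightarrow> s - phi_d \<le> pN)) \<and>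
     \<comment> \<open>optimal testing\<close>
     (q > 0 \<longrightarrow> (\<integral>s. d s * (s - phi_d) + (1 - d s) * pN \<partial>score_dist J) - phi_t \<ge> pN) \<and>
     (q < 1 \<longrightarrow> (\<integral>s. d s * (s - phi_d) + (1 - d s) * pN \<partial>score_dist J) - phi_t \<le> pN)"

end

theory Submission
  imports Defs
begin

text \<open>Sequential rationality turns disclosure into a threshold rule at \<open>c = pN + phi_d\<close>, so
  testing is worth \<open>pN + E[(s - c)\<^sup>+] - phi_t\<close>. If the asset is left untested with positive
  probability, the null message pools untested assets (mean \<open>mu\<close>) with tested ones whose score
  lies below \<open>c\<close>; nondisclosure is negatively correlated with the score, and by unbiasedness
  with the value, so \<open>pN \<le> mu\<close>. Then testing is worth at least
  \<open>pN + E[(s - mu - phi_d)\<^sup>+] - phi_t > pN\<close>, so the agent strictly prefers to test. Conversely,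
  if \<open>phi_t \<ge> E[(s - mu - phi_d)\<^sup>+]\<close>, never testing, with price \<open>mu\<close> after the null message
  and disclosure above \<open>mu + phi_d\<close>, is an equilibrium.\<close>

lemma optimal_disclosure_payoff:
  fixes \<delta> s p \<phi> :: real
  assumes "0 \<le> \<delta>" "\<delta> \<le> 1" "0 < \<delta> \<Longrightarrow> p \<le> s - \<phi>" "\<delta> < 1 \<Longrightarrow> s - \<phi> \<le> p"
  shows "\<delta> * (s - \<phi>) + (1 - \<delta>) * p = p + max 0 (s - (p + \<phi>))"
proof (cases "0 < \<delta> \<and> \<delta> < 1")
  case True
  then show ?thesis using assms by (auto simp: algebra_simps)
next
  case False
  then have "\<delta> = 0 \<or> \<delta> = 1" using assms(1,2) by auto
  then show ?thesis using assms by auto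
qed

lemma (in prob_space) integral_mult_le_of_single_crossing:
  fixes w y :: "'a \<Rightarrow> real" and c :: real
  assumes "integrable M w" "integrable M y" "integrable M (\<lambda>x. w x * y x)"
    and "AE x in M. (w x - expectation w) * (y x - c) \<le> 0"
  shows "expectation (\<lambda>x. w x * y x) \<le> expectation w * expectation y"
proof -
  let ?t = "expectation w"
  have "expectation (\<lambda>x. (w x - ?t) * (y x - c))
      = expectation (\<lambda>x. w x * y x - c * w x - ?t * y x + ?t * c)"
    by (simp add: algebra_simps)
  also have "\<dots> = expectation (\<lambda>x. w x * y x) - ?t * expectation y"
    using assms(1-3) prob_space by simp
  moreover have "0 \<le> expectation (\<lambda>x. - ((w x - ?t) * (y x - c)))"
    using assms(4) by (intro integral_nonneg_AE) (auto elim: eventually_mono)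
  ultimately show ?thesis
    by simp
qed

definition option_value :: "real measure \<Rightarrow> real \<Rightarrow> real" where
  "option_value G k = (\<integral>s. max 0 (s - k) \<partial>G)"

locale test_fee_setting =
  fixes F :: "real measure" and lo hi mu :: real and J :: "(real \<times> real) measure"
  assumes prior: "asset_prior F lo hi mu" and test: "unbiased_test F lo hi J"
begin

sublocale F: prob_space F
  using prior by (simp add: asset_prior_def)

sublocale J: prob_space J
  using test by (simp add: unbiased_test_def)

lemma sets_J: "sets J = sets borel"
  using test by (simp add: unbiased_test_def)

lemma sets_score_dist: "sets (score_dist J) = sets borel"
  by (simp add: score_dist_def)

lemma measurable_fst_snd [measurable]:
  "fst \<in> borel_measurable J" "snd \<in> borel_measurable J"
  by (simp_all add: measurable_cong_sets[OF sets_J refl] borel_measurable_continuous_onI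
      continuous_on_fst continuous_on_snd)

sublocale G: prob_space "score_dist J"
  unfolding score_dist_def by (rule J.prob_space_distr) simp

lemma measurable_score_dist_iff:
  "f \<in> borel_measurable (score_dist J) \<longleftrightarrow> f \<in> borel_measurable borel"
  by (simp add: measurable_cong_sets[OF sets_score_dist refl])

lemma AE_snd_support: "AE x in J. snd x \<in> {lo..hi}"
  using test by (simp add: unbiased_test_def)

lemma AE_score_support: "AE s in score_dist J. s \<in> {lo..hi}"
  unfolding score_dist_def using AE_snd_support by (subst AE_distr_iff) auto

lemma distr_fst: "F = distr J borel fst"
  using test by (simp add: unbiased_test_def)

lemma AE_fst_support: "AE x in J. fst x \<in> {lo..hi}"
proof -
  have "AE x in F. x \<in> {lo..hi}"
    using prior by (intro F.AE_prob_1) (auto simp: asset_prior_def F.emeasure_eq_measure)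
  then have "AE x in distr J borel fst. x \<in> {lo..hi}"
    unfolding distr_fst[symmetric] .
  then show ?thesis
    by (subst (asm) AE_distr_iff) auto
qed

lemma support_bounds: "0 \<le> lo" "lo < hi"
  using prior by (auto simp: asset_prior_def)

lemma integral_fst: "(\<integral>x. fst x \<partial>J) = mu"
proof -
  have "mu = (\<integral>x. x \<partial>F)"
    using prior by (simp add: asset_prior_def)
  then show ?thesis
    by (simp add: distr_fst integral_distr)
qed

lemma unbiased: "B \<in> sets borel \<Longrightarrow>
    (\<integral>x. indicator B (snd x) * fst x \<partial>J) = (\<integral>x. indicator B (snd x) * snd x \<partial>J)"
  using test by (simp add: unbiased_test_def)

lemma integral_snd: "(\<integral>x. snd x \<partial>J) = mu"
  using unbiased[of UNIV] integral_fst by simp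

lemma integrable_weighted:
  assumes [measurable]: "w \<in> borel_measurable borel" and w: "\<And>s. \<bar>w s\<bar> \<le> 1"
  shows "integrable J (\<lambda>x. w (snd x) * fst x)" "integrable J (\<lambda>x. w (snd x) * snd x)"
proof -
  have "\<bar>w s * y\<bar> \<le> hi" if "y \<in> {lo..hi}" for s y
    using that support_bounds mult_mono[OF w[of s], of "\<bar>y\<bar>" hi] by (auto simp: abs_mult)
  then show "integrable J (\<lambda>x. w (snd x) * fst x)" "integrable J (\<lambda>x. w (snd x) * snd x)"
    using AE_fst_support AE_snd_support
    by (auto intro!: J.integrable_const_bound[where B=hi] elim: eventually_mono)
qed

lemma integrable_snd: "integrable J snd"
  using integrable_weighted(2)[of "\<lambda>_. 1"] by simp

lemma mean_bounds: "lo \<le> mu" "mu \<le> hi"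
proof -
  have "AE x in J. lo \<le> snd x" "AE x in J. snd x \<le> hi"
    using AE_snd_support by (auto elim: eventually_mono)
  then show "lo \<le> mu" "mu \<le> hi"
    using integral_snd J.integral_ge_const[OF integrable_snd] J.integral_le_const[OF integrable_snd]
    by auto
qed

lemma unbiased_simple_weight:
  assumes [measurable]: "w \<in> borel_measurable borel" "A \<in> sets borel" "B \<in> sets borel"
    and w: "AE x in J. w (snd x) = indicator A (snd x) + b * indicator B (snd x)"
  shows "(\<integral>x. w (snd x) * fst x \<partial>J) = (\<integral>x. w (snd x) * snd x \<partial>J)"
proof -
  have "(\<integral>x. w (snd x) * f x \<partial>J)
      = (\<integral>x. indicator A (snd x) * f x \<partial>J) + b * (\<integral>x. indicator B (snd x) * f x \<partial>J)"
    if "integrable J (\<lambda>x. indicator A (snd x) * f x)" "integrable J (\<lambda>x. indicator B (snd x) * f x)"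
      and [measurable]: "f \<in> borel_measurable J" for f
  proof -
    have "(\<integral>x. w (snd x) * f x \<partial>J)
        = (\<integral>x. indicator A (snd x) * f x + b * (indicator B (snd x) * f x) \<partial>J)"
      using w by (intro integral_cong_AE) (auto simp: algebra_simps elim: eventually_mono)
    then show ?thesis
      using that by simp
  qed
  then show ?thesis
    using integrable_weighted[of "indicator A"] integrable_weighted[of "indicator B"]
      unbiased[of A] unbiased[of B]
    by simp
qed

lemma integrable_score_dist:
  fixes f :: "real \<Rightarrow> real"
  assumes "f \<in> borel_measurable borel" "\<And>s. s \<in> {lo..hi} \<Longrightarrow> \<bar>f s\<bar> \<le> B"
  shows "integrable (score_dist J) f"
  using assms AE_score_support
  by (auto simp: measurable_score_dist_iff intro!: G.integrable_const_bound[where B=B]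
      elim: eventually_mono)

lemma integrable_option_payoff: "integrable (score_dist J) (\<lambda>s. max 0 (s - k))"
  by (rule integrable_score_dist[where B="hi + \<bar>k\<bar>"]) (use support_bounds in auto)

lemma set_integral_eq_option_value:
  "(LINT s:{k..hi}|score_dist J. s - k) = option_value (score_dist J) k"
  unfolding set_lebesgue_integral_def option_value_def
  using AE_score_support
  by (intro integral_cong_AE)
    (auto simp: measurable_score_dist_iff indicator_def elim: eventually_mono)

lemma option_value_antimono:
  "k \<le> k' \<Longrightarrow> option_value (score_dist J) k' \<le> option_value (score_dist J) k"
  unfolding option_value_def
  using integrable_option_payoff by (intro integral_mono) auto

lemma test_payoff_optimal_disclosure:
  assumes "d \<in> borel_measurable borel" "\<And>s. d s \<in> {0..1}"
    and "\<forall>s\<in>{lo..hi}. (d s > 0 \<longrightarrow> s - phi_d \<ge> p) \<and> (d s < 1 \<longrightarrow> s - phi_d \<le> p)"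
  shows "(\<integral>s. d s * (s - phi_d) + (1 - d s) * p \<partial>score_dist J)
      = p + option_value (score_dist J) (p + phi_d)"
proof -
  have "(\<integral>s. d s * (s - phi_d) + (1 - d s) * p \<partial>score_dist J)
      = (\<integral>s. p + max 0 (s - (p + phi_d)) \<partial>score_dist J)"
  proof (intro integral_cong_AE eventually_mono[OF AE_score_support])
    fix s assume "s \<in> {lo..hi}"
    then show "d s * (s - phi_d) + (1 - d s) * p = p + max 0 (s - (p + phi_d))"
      using assms(2,3) by (intro optimal_disclosure_payoff) auto
  qed (use assms(1) in \<open>auto simp: measurable_score_dist_iff\<close>)
  then show ?thesis
    using integrable_option_payoff by (simp add: option_value_def G.prob_space)
qed

lemma null_price_le_mean:
  assumes eq: "equilibrium F lo hi J phi_t phi_d q d pN" and "q < 1"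
  shows "pN \<le> mu"
proof -
  define c where "c = pN + phi_d"
  define t where "t = (\<integral>x. 1 - d (snd x) \<partial>J)"
  have [measurable]: "d \<in> borel_measurable borel" and d01: "\<And>s. d s \<in> {0..1}" and "0 \<le> q"
    and disc: "\<And>s. s \<in> {lo..hi} \<Longrightarrow> (d s > 0 \<longrightarrow> s - phi_d \<ge> pN) \<and> (d s < 1 \<longrightarrow> s - phi_d \<le> pN)"
    and bayes: "(1 - q) + q * t > 0 \<Longrightarrow>
      pN * ((1 - q) + q * t) = (1 - q) * mu + q * (\<integral>x. (1 - d (snd x)) * fst x \<partial>J)"
    using eq prior unfolding equilibrium_def asset_prior_def t_def by auto
  txt \<open>Unbiasedness is only given against indicators of score sets; the threshold form of the
    nondisclosure weight is what makes it applicable.\<close>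
  have weight: "1 - d s = indicator {..<c} s + (1 - d c) * indicator {c} s" if "s \<in> {lo..hi}" for s
    using disc[OF that] d01[of s] by (cases s c rule: linorder_cases) (auto simp: c_def)
  have int_weight: "integrable J (\<lambda>x. 1 - d (snd x))"
    using d01 by (intro J.integrable_const_bound[where B=1]) auto
  have "0 \<le> t" "t \<le> 1"
    unfolding t_def using d01 int_weight
    by (auto intro!: integral_nonneg_AE J.integral_le_const)
  have "(\<integral>x. (1 - d (snd x)) * fst x \<partial>J) = (\<integral>x. (1 - d (snd x)) * snd x \<partial>J)"
    by (rule unbiased_simple_weight[where A="{..<c}" and B="{c}" and b="1 - d c"])
      (auto intro!: eventually_mono[OF AE_snd_support] weight)
  also have "\<dots> \<le> t * mu"
  proof -
    have "AE x in J. (1 - d (snd x) - t) * (snd x - c) \<le> 0"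
    proof (rule eventually_mono[OF AE_snd_support])
      fix x :: "real \<times> real" assume "snd x \<in> {lo..hi}"
      then show "(1 - d (snd x) - t) * (snd x - c) \<le> 0"
        using weight[OF \<open>snd x \<in> {lo..hi}\<close>] \<open>0 \<le> t\<close> \<open>t \<le> 1\<close>
        by (cases "snd x" c rule: linorder_cases) (auto simp: mult_le_0_iff)
    qed
    then show ?thesis
      using J.integral_mult_le_of_single_crossing[of "\<lambda>x. 1 - d (snd x)" snd c]
        int_weight integrable_snd integrable_weighted(2)[of "\<lambda>s. 1 - d s"] d01
      by (simp add: t_def integral_snd)
  qed
  finally have nondisclosed_mean: "(\<integral>x. (1 - d (snd x)) * fst x \<partial>J) \<le> t * mu" .
  have pos: "(1 - q) + q * t > 0"
    using \<open>q < 1\<close> \<open>0 \<le> q\<close> \<open>0 \<le> t\<close> by (simp add: add_pos_nonneg)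
  then have "pN * ((1 - q) + q * t) \<le> (1 - q) * mu + q * (t * mu)"
    using bayes mult_left_mono[OF nondisclosed_mean \<open>0 \<le> q\<close>] by simp
  also have "\<dots> = mu * ((1 - q) + q * t)"
    by (simp add: algebra_simps)
  finally show ?thesis
    using pos by simp
qed

lemma equilibrium_tests_surely:
  assumes "phi_t < option_value (score_dist J) (mu + phi_d)"
    and eq: "equilibrium F lo hi J phi_t phi_d q d pN"
  shows "q = 1"
proof (rule ccontr)
  have "q \<le> 1" and d: "d \<in> borel_measurable borel" "\<And>s. d s \<in> {0..1}"
    and disc: "\<forall>s\<in>{lo..hi}. (d s > 0 \<longrightarrow> s - phi_d \<ge> pN) \<and> (d s < 1 \<longrightarrow> s - phi_d \<le> pN)"
    and no_gain: "q < 1 \<Longrightarrow>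
      (\<integral>s. d s * (s - phi_d) + (1 - d s) * pN \<partial>score_dist J) - phi_t \<le> pN"
    using eq unfolding equilibrium_def by auto
  assume "q \<noteq> 1"
  with \<open>q \<le> 1\<close> have "q < 1" by simp
  have "pN + phi_t < pN + option_value (score_dist J) (mu + phi_d)"
    using assms(1) by simp
  also have "\<dots> \<le> pN + option_value (score_dist J) (pN + phi_d)"
    using null_price_le_mean[OF eq \<open>q < 1\<close>] option_value_antimono by simp
  also have "\<dots> = (\<integral>s. d s * (s - phi_d) + (1 - d s) * pN \<partial>score_dist J)"
    using test_payoff_optimal_disclosure[OF d disc] by simp
  finally show False
    using no_gain[OF \<open>q < 1\<close>] by simp
qed

lemma no_testing_equilibrium:
  assumes "option_value (score_dist J) (mu + phi_d) \<le> phi_t"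
  shows "equilibrium F lo hi J phi_t phi_d 0 (\<lambda>s. if mu + phi_d < s then 1 else 0) mu"
proof -
  define d :: "real \<Rightarrow> real" where "d s = (if mu + phi_d < s then 1 else 0)" for s
  have [measurable]: "d \<in> borel_measurable borel"
    unfolding d_def by measurable
  have disc: "\<forall>s\<in>{lo..hi}. (d s > 0 \<longrightarrow> s - phi_d \<ge> mu) \<and> (d s < 1 \<longrightarrow> s - phi_d \<le> mu)"
    by (simp add: d_def)
  have "(\<integral>s. d s * (s - phi_d) + (1 - d s) * mu \<partial>score_dist J) - phi_t \<le> mu"
    using test_payoff_optimal_disclosure[OF _ _ disc] assms by (simp add: d_def)
  moreover have "(\<integral>x. x \<partial>F) = mu"
    using prior by (simp add: asset_prior_def)
  ultimately show ?thesis
    using disc mean_bounds unfolding equilibrium_def d_def[abs_def] by auto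
qed

end

theorem lemma1:
  fixes F :: "real measure" and J :: "(real \<times> real) measure"
    and lo hi mu phi_t phi_d :: real
  assumes "asset_prior F lo hi mu"
    and "unbiased_test F lo hi J"
  shows "(phi_t < (LINT s:{mu + phi_d..hi}|score_dist J. s - (mu + phi_d)) \<longrightarrow>
            (\<forall>q d pN. equilibrium F lo hi J phi_t phi_d q d pN \<longrightarrow> q = 1)) \<and>
         (\<not> phi_t < (LINT s:{mu + phi_d..hi}|score_dist J. s - (mu + phi_d)) \<longrightarrow>
            (\<exists>d pN. equilibrium F lo hi J phi_t phi_d 0 d pN))"
proof -
  interpret test_fee_setting F lo hi mu J
    using assms by unfold_locales
  show ?thesis
    unfolding set_integral_eq_option_value
    using equilibrium_tests_surely no_testing_equilibrium by (meson not_less)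
qed

end
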